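(* Let $\mathcal{H}$ be a finite family of digraphs containing a directed path $P$ of length $p$. Let $D$ be a digraph containing no subgraph isomorphic to a graph in $\mathcal{H}^-_p$, and let $k$ be an integer. Then $(D,k)$ is a yes-instance of $\mathcal{H}$-SCC Deletion if and only if it is a yes-instance of $\{P\}$-SCC Deletion.
   Context: Subgraphs are not necessarily induced; strong components are maximal sets of mutually reachable vertices. For a family $\mathcal{F}$, $\mathcal{F}$-SCC Deletion asks, given $(D,k)$, whether some $X\subseteq V(D)$ with $|X|\le k$ is such that no strong component of $D-X$ contains a subgraph isomorphic to a graph in $\mathcal{F}$. For a digraph $H$, $GPC(H)$ is the set of strongly connected digraphs $H\cup P_1\cup\dots\cup P_\ell$ (union of vertex and arc sets) where each $P_i$ is a directed path with both end-points in $V(H)$ and the ordered end-point pairs of the $P_i$ are pairwise distinct; $\{P_1,\dots,P_\ell\}$ is a witnessing collection of paths. $GPC(\mathcal{H})=\bigcup_{H\in\mathcal{H}}GPC(H)$. $\mathcal{H}^-_p$ is the set of digraphs in $GPC(\mathcal{H})$ admitting a witnessing collection of paths all of length at most $p-1$. *)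

theory Defs
  imports Main
begin

type_synonym 'a digraph = "'a set \<times> ('a \<times> 'a) set"

definition verts :: "'a digraph \<Rightarrow> 'a set" where "verts G = fst G"
definition arcs :: "'a digraph \<Rightarrow> ('a \<times> 'a) set" where "arcs G = snd G"

definition wf_digraph :: "'a digraph \<Rightarrow> bool" where
  "wf_digraph G \<longleftrightarrow> finite (verts G) \<and> arcs G \<subseteq> verts G \<times> verts G
     \<and> (\<forall>v. (v, v) \<notin> arcs G)"

definition contains_copy :: "'a digraph \<Rightarrow> 'b digraph \<Rightarrow> bool" where
  "contains_copy G H \<longleftrightarrow> (\<exists>f. inj_on f (verts H) \<and> f ` verts H \<subseteq> verts G
      \<and> (\<forall>(u, v) \<in> arcs H. (f u, f v) \<in> arcs G))"

definition strongly_connected :: "'a digraph \<Rightarrow> bool" where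
  "strongly_connected G \<longleftrightarrow>
     (\<forall>u \<in> verts G. \<forall>v \<in> verts G. (u, v) \<in> (arcs G)\<^sup>*)"

definition del_verts :: "'a digraph \<Rightarrow> 'a set \<Rightarrow> 'a digraph" where
  "del_verts G X = (verts G - X, {(u, v) \<in> arcs G. u \<notin> X \<and> v \<notin> X})"

definition induce :: "'a digraph \<Rightarrow> 'a set \<Rightarrow> 'a digraph" where
  "induce G C = (C, {(u, v) \<in> arcs G. u \<in> C \<and> v \<in> C})"

definition strong_components :: "'a digraph \<Rightarrow> 'a set set" where
  "strong_components G = {C. \<exists>v \<in> verts G.
      C = {u \<in> verts G. (v, u) \<in> (arcs G)\<^sup>* \<and> (u, v) \<in> (arcs G)\<^sup>*}}"

definition scc_deletion_yes :: "'b digraph set \<Rightarrow> 'a digraph \<Rightarrow> int \<Rightarrow> bool" where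
  "scc_deletion_yes F D k \<longleftrightarrow> (\<exists>X \<subseteq> verts D. int (card X) \<le> k \<and>
     (\<forall>C \<in> strong_components (del_verts D X). \<forall>H \<in> F.
        \<not> contains_copy (induce (del_verts D X) C) H))"

text \<open>Directed path with vertex sequence xs (distinct); its length is length xs - 1.\<close>
definition path_arcs :: "'a list \<Rightarrow> ('a \<times> 'a) set" where
  "path_arcs xs = set (zip xs (tl xs))"

definition is_dipath :: "'a list \<Rightarrow> bool" where
  "is_dipath xs \<longleftrightarrow> xs \<noteq> [] \<and> distinct xs"

definition is_path_digraph :: "'a digraph \<Rightarrow> nat \<Rightarrow> bool" where
  "is_path_digraph G p \<longleftrightarrow> (\<exists>xs. is_dipath xs \<and> length xs = Suc p
      \<and> verts G = set xs \<and> arcs G = path_arcs xs)"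

text \<open>Such a subgraph is
  realised directly inside D's vertex type: an injective copy f(H) of some H in \<H>
  together with a witnessing collection of directed paths Ps (length at most p-1,
  end-points in f(V(H)), pairwise distinct ordered end-point pairs) whose union with
  f(H) is strongly connected and is a subgraph of D.\<close>
definition contains_Hminus :: "'a digraph \<Rightarrow> 'b digraph set \<Rightarrow> nat \<Rightarrow> bool" where
  "contains_Hminus D \<H> p \<longleftrightarrow> (\<exists>H \<in> \<H>. \<exists>(f :: 'b \<Rightarrow> 'a) (Ps :: 'a list list).
      inj_on f (verts H)
    \<and> (\<forall>xs \<in> set Ps. is_dipath xs \<and> length xs - 1 \<le> p - 1 \<and> length xs \<le> p
            \<and> hd xs \<in> f ` verts H \<and> last xs \<in> f ` verts H)
    \<and> distinct (map (\<lambda>xs. (hd xs, last xs)) Ps)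
    \<and> (let G = (f ` verts H \<union> (\<Union>xs \<in> set Ps. set xs),
                 (\<lambda>(u, v). (f u, f v)) ` arcs H \<union> (\<Union>xs \<in> set Ps. path_arcs xs))
       in strongly_connected G \<and> verts G \<subseteq> verts D \<and> arcs G \<subseteq> arcs D))"

end

theory Submission
  imports Defs
begin

(* If deleting X leaves no directed path of length p inside a strong component, then any two
   vertices u, v of a component are joined by a directed path of length at most p - 1: every
   directed u-v path in D - X stays in the component, since each of its vertices is reachable
   from u and reaches v. So a copy of some H in \<H> inside a component, together with one such
   short path for every ordered pair of distinct vertices of the copy, is a strongly connected
   subgraph of D lying in \<H>^-_p, which is excluded. The converse holds because P is in \<H>. *)

lemma path_arcs_Nil [simp]: "path_arcs [] = {}"
  by (simp add: path_arcs_def)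

lemma path_arcs_singleton [simp]: "path_arcs [a] = {}"
  by (simp add: path_arcs_def)

lemma path_arcs_Cons_Cons [simp]: "path_arcs (a # b # xs) = insert (a, b) (path_arcs (b # xs))"
  by (simp add: path_arcs_def)

lemma path_arcs_Cons: "xs \<noteq> [] \<Longrightarrow> path_arcs (a # xs) = insert (a, hd xs) (path_arcs xs)"
  by (cases xs) auto

lemma path_arcs_append:
  "xs \<noteq> [] \<Longrightarrow> ys \<noteq> [] \<Longrightarrow>
    path_arcs (xs @ ys) = insert (last xs, hd ys) (path_arcs xs \<union> path_arcs ys)"
  by (induction xs) (auto simp: path_arcs_Cons)

lemma path_arcs_append_subset: "path_arcs xs \<union> path_arcs ys \<subseteq> path_arcs (xs @ ys)"
  by (cases "xs = [] \<or> ys = []") (auto simp: path_arcs_append)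

lemma path_arcs_subset: "path_arcs xs \<subseteq> set xs \<times> set xs"
  by (induction xs rule: induct_list012) auto

lemma path_arcs_map: "path_arcs (map f xs) = map_prod f f ` path_arcs xs"
  by (simp add: path_arcs_def map_tl[symmetric] zip_map_map map_prod_def)

lemma hd_last_in_rtrancl_path_arcs: "xs \<noteq> [] \<Longrightarrow> (hd xs, last xs) \<in> (path_arcs xs)\<^sup>*"
proof (induction xs)
  case (Cons a xs)
  show ?case
  proof (cases "xs = []")
    case False
    then have "path_arcs xs \<subseteq> path_arcs (a # xs)" and "(a, hd xs) \<in> path_arcs (a # xs)"
      by (auto simp: path_arcs_Cons)
    with Cons.IH[OF False] False show ?thesis
      by (auto dest: rtrancl_mono[THEN subsetD] intro: converse_rtrancl_into_rtrancl)
  qed simp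
qed simp

lemma rtrancl_path_arcs_through:
  assumes "w \<in> set xs"
  shows "(hd xs, w) \<in> (path_arcs xs)\<^sup>*" and "(w, last xs) \<in> (path_arcs xs)\<^sup>*"
proof -
  obtain ys zs where xs: "xs = ys @ w # zs"
    using assms by (meson split_list)
  have "path_arcs (ys @ [w]) \<subseteq> path_arcs xs"
    using path_arcs_append_subset[of "ys @ [w]" zs] xs by simp
  moreover have "(hd xs, w) \<in> (path_arcs (ys @ [w]))\<^sup>*"
    using hd_last_in_rtrancl_path_arcs[of "ys @ [w]"] xs by (cases ys) auto
  ultimately show "(hd xs, w) \<in> (path_arcs xs)\<^sup>*"
    using rtrancl_mono by blast
  have "path_arcs (w # zs) \<subseteq> path_arcs xs"
    using path_arcs_append_subset[of ys "w # zs"] xs by simp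
  moreover have "(w, last xs) \<in> (path_arcs (w # zs))\<^sup>*"
    using hd_last_in_rtrancl_path_arcs[of "w # zs"] xs by simp
  ultimately show "(w, last xs) \<in> (path_arcs xs)\<^sup>*"
    using rtrancl_mono by blast
qed

lemma rtrancl_imp_dipath:
  assumes "(u, v) \<in> R\<^sup>*"
  shows "\<exists>xs. is_dipath xs \<and> hd xs = u \<and> last xs = v \<and> path_arcs xs \<subseteq> R"
  using assms
proof (induction rule: converse_rtrancl_induct)
  case base
  show ?case
    by (rule exI[of _ "[v]"]) (simp add: is_dipath_def)
next
  case (step y z)
  then obtain xs where xs: "is_dipath xs" "hd xs = z" "last xs = v" "path_arcs xs \<subseteq> R"
    by blast
  show ?case
  proof (cases "y \<in> set xs")
    case True
    then obtain ys zs where split: "xs = ys @ y # zs"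
      by (meson split_list)
    have "path_arcs (y # zs) \<subseteq> path_arcs xs"
      using path_arcs_append_subset[of ys "y # zs"] split by simp
    then show ?thesis
      using xs split by (intro exI[of _ "y # zs"]) (auto simp: is_dipath_def)
  next
    case False
    then show ?thesis
      using xs step.hyps(1)
      by (intro exI[of _ "y # xs"]) (auto simp: is_dipath_def path_arcs_Cons)
  qed
qed

lemma contains_copy_mono:
  "contains_copy G H \<Longrightarrow> verts G \<subseteq> verts G' \<Longrightarrow> arcs G \<subseteq> arcs G' \<Longrightarrow> contains_copy G' H"
  unfolding contains_copy_def by (elim exE) (intro exI, fast)

lemma dipath_contains_path_digraph:
  assumes "is_path_digraph P p" and "distinct xs" and "length xs = Suc p"
  shows "contains_copy (set xs, path_arcs xs) P"
proof -
  obtain ys where ys: "distinct ys" "length ys = Suc p" "verts P = set ys" "arcs P = path_arcs ys"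
    using assms(1) unfolding is_path_digraph_def is_dipath_def by blast
  define f where "f a = the (map_of (zip ys xs) a)" for a
  have "map f ys = xs"
    using ys(1,2) assms(3) by (intro nth_equalityI) (auto simp: f_def map_of_zip_nth)
  then have "inj_on f (verts P)" and "f ` verts P = set xs"
    using assms(2) ys(3) distinct_map[of f ys] by auto
  moreover have "\<forall>(u, v) \<in> arcs P. (f u, f v) \<in> path_arcs xs"
    using \<open>map f ys = xs\<close> ys(4) path_arcs_map[of f ys] by auto
  ultimately show ?thesis
    unfolding contains_copy_def verts_def arcs_def by (intro exI[of _ f]) simp
qed

lemma long_dipath_contains_path_digraph:
  assumes "is_path_digraph P p" and "distinct xs" and "Suc p \<le> length xs"
    and "set xs \<subseteq> verts G" and "path_arcs xs \<subseteq> arcs G"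
  shows "contains_copy G P"
proof -
  let ?ys = "take (Suc p) xs"
  have "contains_copy (set ?ys, path_arcs ?ys) P"
    using assms(1-3) by (intro dipath_contains_path_digraph) auto
  then show ?thesis
  proof (rule contains_copy_mono)
    show "verts (set ?ys, path_arcs ?ys) \<subseteq> verts G"
      using assms(4) set_take_subset[of "Suc p" xs] by (simp add: verts_def)
    show "arcs (set ?ys, path_arcs ?ys) \<subseteq> arcs G"
      using assms(5) path_arcs_append_subset[of ?ys "drop (Suc p) xs"] by (auto simp: arcs_def)
  qed
qed

lemma strong_component_rtrancl:
  assumes "C \<in> strong_components G" and "u \<in> C" and "v \<in> C"
  shows "(u, v) \<in> (arcs G)\<^sup>*"
  using assms unfolding strong_components_def by (auto intro: rtrancl_trans)

lemma strong_component_convex: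
  assumes "arcs G \<subseteq> verts G \<times> verts G" and "C \<in> strong_components G"
    and "u \<in> C" and "v \<in> C" and "(u, w) \<in> (arcs G)\<^sup>*" and "(w, v) \<in> (arcs G)\<^sup>*"
  shows "w \<in> C"
proof -
  obtain c where C: "C = {x \<in> verts G. (c, x) \<in> (arcs G)\<^sup>* \<and> (x, c) \<in> (arcs G)\<^sup>*}"
    using assms(2) unfolding strong_components_def by blast
  have "w \<in> verts G"
    using assms(5,1,3) C by (induction rule: rtrancl_induct) auto
  with assms(3-6) C show ?thesis
    by (auto intro: rtrancl_trans)
qed

lemma strong_component_dipath:
  assumes "arcs G \<subseteq> verts G \<times> verts G" and "C \<in> strong_components G"
    and "u \<in> C" and "v \<in> C"
  obtains xs where "is_dipath xs" and "hd xs = u" and "last xs = v"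
    and "set xs \<subseteq> C" and "path_arcs xs \<subseteq> arcs (induce G C)"
proof -
  obtain xs where xs: "is_dipath xs" "hd xs = u" "last xs = v" "path_arcs xs \<subseteq> arcs G"
    using rtrancl_imp_dipath[OF strong_component_rtrancl[OF assms(2-4)]] by blast
  have "set xs \<subseteq> C"
  proof
    fix w assume "w \<in> set xs"
    then have "(u, w) \<in> (arcs G)\<^sup>*" and "(w, v) \<in> (arcs G)\<^sup>*"
      using rtrancl_path_arcs_through[of w xs] rtrancl_mono[OF xs(4)] xs(2,3) by auto
    with assms show "w \<in> C"
      by (rule_tac strong_component_convex) auto
  qed
  moreover have "path_arcs xs \<subseteq> arcs (induce G C)"
    using xs(4) path_arcs_subset[of xs] calculation by (auto simp: induce_def arcs_def)
  ultimately show ?thesis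
    using xs that by blast
qed

lemma short_dipath_in_strong_component:
  assumes "arcs G \<subseteq> verts G \<times> verts G" and "C \<in> strong_components G"
    and "is_path_digraph P p" and "\<not> contains_copy (induce G C) P"
    and "u \<in> C" and "v \<in> C"
  obtains xs where "is_dipath xs" and "length xs \<le> p" and "hd xs = u" and "last xs = v"
    and "set xs \<subseteq> C" and "path_arcs xs \<subseteq> arcs (induce G C)"
proof -
  obtain xs where xs: "is_dipath xs" "hd xs = u" "last xs = v"
      "set xs \<subseteq> C" "path_arcs xs \<subseteq> arcs (induce G C)"
    using strong_component_dipath[OF assms(1,2,5,6)] by blast
  have "length xs \<le> p"
  proof (rule ccontr)
    assume "\<not> length xs \<le> p"
    then have "contains_copy (induce G C) P"
      using xs by (intro long_dipath_contains_path_digraph[OF assms(3)])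
        (auto simp: is_dipath_def induce_def verts_def)
    with assms(4) show False ..
  qed
  with xs that show ?thesis
    by blast
qed

lemma strongly_connected_union_dipaths:
  assumes ends: "\<And>xs. xs \<in> Q \<Longrightarrow> xs \<noteq> [] \<and> hd xs \<in> S \<and> last xs \<in> S"
    and links: "\<And>a b. a \<in> S \<Longrightarrow> b \<in> S \<Longrightarrow> a \<noteq> b \<Longrightarrow> \<exists>xs \<in> Q. hd xs = a \<and> last xs = b"
  shows "strongly_connected (S \<union> (\<Union>xs \<in> Q. set xs), A \<union> (\<Union>xs \<in> Q. path_arcs xs))"
proof -
  let ?R = "A \<union> (\<Union>xs \<in> Q. path_arcs xs)"
  have through: "(hd xs, w) \<in> ?R\<^sup>*" "(w, last xs) \<in> ?R\<^sup>*" if "xs \<in> Q" "w \<in> set xs" for xs w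
    using rtrancl_path_arcs_through[OF that(2)] rtrancl_mono[of "path_arcs xs" ?R] that(1) by auto
  have S_reach: "(a, b) \<in> ?R\<^sup>*" if ab: "a \<in> S" "b \<in> S" for a b
  proof (cases "a = b")
    case False
    then obtain xs where "xs \<in> Q" "hd xs = a" "last xs = b"
      using links ab by blast
    with through(1)[of xs "last xs"] ends show ?thesis
      by auto
  qed simp
  have via_S: "\<exists>a \<in> S. \<exists>b \<in> S. (a, x) \<in> ?R\<^sup>* \<and> (x, b) \<in> ?R\<^sup>*"
    if "x \<in> S \<union> (\<Union>xs \<in> Q. set xs)" for x
    using that ends through by blast
  show ?thesis
    unfolding strongly_connected_def verts_def arcs_def fst_conv snd_conv
    using via_S S_reach by (meson rtrancl_trans)
qed

lemma obtain_paths_between_distinct_pairs: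
  assumes "finite S"
    and "\<And>a b. a \<in> S \<Longrightarrow> b \<in> S \<Longrightarrow> a \<noteq> b \<Longrightarrow> \<exists>xs. Q xs \<and> hd xs = a \<and> last xs = b"
  obtains Ps where "\<forall>xs \<in> set Ps. Q xs \<and> hd xs \<in> S \<and> last xs \<in> S"
    and "distinct (map (\<lambda>xs. (hd xs, last xs)) Ps)"
    and "\<And>a b. a \<in> S \<Longrightarrow> b \<in> S \<Longrightarrow> a \<noteq> b \<Longrightarrow> \<exists>xs \<in> set Ps. hd xs = a \<and> last xs = b"
proof -
  define pairs where "pairs = {(a, b) \<in> S \<times> S. a \<noteq> b}"
  have "finite pairs"
    using assms(1) unfolding pairs_def by (auto intro: finite_subset[of _ "S \<times> S"])
  then obtain l where l: "set l = pairs" "distinct l"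
    using finite_distinct_list by blast
  have "\<forall>ab \<in> pairs. \<exists>xs. Q xs \<and> hd xs = fst ab \<and> last xs = snd ab"
    using assms(2) unfolding pairs_def by auto
  then obtain g where g: "\<And>ab. ab \<in> pairs \<Longrightarrow> Q (g ab) \<and> hd (g ab) = fst ab \<and> last (g ab) = snd ab"
    by metis
  show ?thesis
  proof (rule that[of "map g l"])
    show "\<forall>xs \<in> set (map g l). Q xs \<and> hd xs \<in> S \<and> last xs \<in> S"
      using g l(1) unfolding pairs_def by auto
    have "map (\<lambda>xs. (hd xs, last xs)) (map g l) = l"
      unfolding map_map by (rule map_idI) (use g l(1) in auto)
    with l(2) show "distinct (map (\<lambda>xs. (hd xs, last xs)) (map g l))"
      by simp
    show "\<exists>xs \<in> set (map g l). hd xs = a \<and> last xs = b" if "a \<in> S" "b \<in> S" "a \<noteq> b" for a b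
    proof
      have "(a, b) \<in> set l"
        using that l(1) unfolding pairs_def by simp
      then show "g (a, b) \<in> set (map g l)" and "hd (g (a, b)) = a \<and> last (g (a, b)) = b"
        using g[of "(a, b)"] l(1) by auto
    qed
  qed
qed

lemma contains_Hminus_if_copy_with_short_dipaths:
  assumes "H \<in> \<H>" and "finite (verts H)"
    and "inj_on f (verts H)" and "f ` verts H \<subseteq> verts D"
    and "\<forall>(u, v) \<in> arcs H. (f u, f v) \<in> arcs D"
    and "\<And>u v. u \<in> f ` verts H \<Longrightarrow> v \<in> f ` verts H \<Longrightarrow> u \<noteq> v \<Longrightarrow>
      \<exists>xs. is_dipath xs \<and> length xs \<le> p \<and> hd xs = u \<and> last xs = v
        \<and> set xs \<subseteq> verts D \<and> path_arcs xs \<subseteq> arcs D"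
  shows "contains_Hminus D \<H> p"
proof -
  let ?S = "f ` verts H"
  obtain Ps where Ps: "\<forall>xs \<in> set Ps. is_dipath xs \<and> length xs \<le> p
        \<and> set xs \<subseteq> verts D \<and> path_arcs xs \<subseteq> arcs D \<and> hd xs \<in> ?S \<and> last xs \<in> ?S"
    and distinct_ends: "distinct (map (\<lambda>xs. (hd xs, last xs)) Ps)"
    and links: "\<And>a b. a \<in> ?S \<Longrightarrow> b \<in> ?S \<Longrightarrow> a \<noteq> b \<Longrightarrow> \<exists>xs \<in> set Ps. hd xs = a \<and> last xs = b"
  proof (rule obtain_paths_between_distinct_pairs[of ?S
        "\<lambda>xs. is_dipath xs \<and> length xs \<le> p \<and> set xs \<subseteq> verts D \<and> path_arcs xs \<subseteq> arcs D"])
    show "finite ?S"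
      using assms(2) by simp
    show "\<exists>xs. (is_dipath xs \<and> length xs \<le> p \<and> set xs \<subseteq> verts D \<and> path_arcs xs \<subseteq> arcs D)
        \<and> hd xs = a \<and> last xs = b" if "a \<in> ?S" "b \<in> ?S" "a \<noteq> b" for a b
      using assms(6)[OF that] by blast
  qed blast
  have "strongly_connected (?S \<union> (\<Union>xs \<in> set Ps. set xs),
      (\<lambda>(u, v). (f u, f v)) ` arcs H \<union> (\<Union>xs \<in> set Ps. path_arcs xs))"
    using Ps links by (intro strongly_connected_union_dipaths) (auto simp: is_dipath_def)
  moreover have "\<forall>xs \<in> set Ps. is_dipath xs \<and> length xs - 1 \<le> p - 1 \<and> length xs \<le> p
      \<and> hd xs \<in> ?S \<and> last xs \<in> ?S"
    using Ps diff_le_mono by blast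
  moreover have "?S \<union> (\<Union>xs \<in> set Ps. set xs) \<subseteq> verts D"
    using Ps assms(4) by blast
  moreover have "(\<lambda>(u, v). (f u, f v)) ` arcs H \<union> (\<Union>xs \<in> set Ps. path_arcs xs) \<subseteq> arcs D"
    using Ps assms(5) by fastforce
  ultimately show ?thesis
    using assms(3) distinct_ends unfolding contains_Hminus_def Let_def
    by (intro bexI[OF _ assms(1)] exI[of _ f] exI[of _ Ps]) (simp add: verts_def arcs_def)
qed

lemma contains_Hminus_if_strong_component_contains_copy:
  assumes "arcs G \<subseteq> verts G \<times> verts G" and "verts G \<subseteq> verts D" and "arcs G \<subseteq> arcs D"
    and C: "C \<in> strong_components G"
    and "is_path_digraph P p" and "\<not> contains_copy (induce G C) P"
    and "H \<in> \<H>" and "finite (verts H)" and "contains_copy (induce G C) H"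
  shows "contains_Hminus D \<H> p"
proof -
  obtain f where f: "inj_on f (verts H)" "f ` verts H \<subseteq> C"
      "\<forall>(u, v) \<in> arcs H. (f u, f v) \<in> arcs (induce G C)"
    using assms(9) unfolding contains_copy_def by (auto simp: induce_def verts_def)
  have C_sub: "C \<subseteq> verts D" "arcs (induce G C) \<subseteq> arcs D"
    using C assms(2,3) unfolding strong_components_def by (auto simp: induce_def arcs_def)
  show ?thesis
  proof (rule contains_Hminus_if_copy_with_short_dipaths[OF assms(7,8) f(1)])
    show "f ` verts H \<subseteq> verts D" "\<forall>(u, v) \<in> arcs H. (f u, f v) \<in> arcs D"
      using f(2,3) C_sub by auto
    fix u v assume "u \<in> f ` verts H" "v \<in> f ` verts H"
    with f(2) have "u \<in> C" "v \<in> C"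
      by auto
    then obtain xs where "is_dipath xs" "length xs \<le> p" "hd xs = u" "last xs = v"
        "set xs \<subseteq> C" "path_arcs xs \<subseteq> arcs (induce G C)"
      by (rule short_dipath_in_strong_component[OF assms(1) C assms(5,6)])
    with C_sub show "\<exists>xs. is_dipath xs \<and> length xs \<le> p \<and> hd xs = u \<and> last xs = v
        \<and> set xs \<subseteq> verts D \<and> path_arcs xs \<subseteq> arcs D"
      by blast
  qed
qed

theorem lemma26:
  fixes \<H> :: "'b digraph set" and P :: "'b digraph" and D :: "'a digraph"
    and p :: nat and k :: int
  assumes "finite \<H>" and "\<forall>H \<in> \<H>. wf_digraph H"
    and "P \<in> \<H>" and "is_path_digraph P p"
    and "wf_digraph D"
    and "\<not> contains_Hminus D \<H> p"
  shows "scc_deletion_yes \<H> D k \<longleftrightarrow> scc_deletion_yes {P} D k"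
proof
  assume "scc_deletion_yes \<H> D k"
  with assms(3) show "scc_deletion_yes {P} D k"
    unfolding scc_deletion_yes_def by blast
next
  assume "scc_deletion_yes {P} D k"
  then obtain X where X: "X \<subseteq> verts D" "int (card X) \<le> k"
    and P_free: "\<And>C. C \<in> strong_components (del_verts D X) \<Longrightarrow>
      \<not> contains_copy (induce (del_verts D X) C) P"
    unfolding scc_deletion_yes_def by blast
  let ?G = "del_verts D X"
  have G: "arcs ?G \<subseteq> verts ?G \<times> verts ?G" "verts ?G \<subseteq> verts D" "arcs ?G \<subseteq> arcs D"
    using assms(5) by (auto simp: wf_digraph_def del_verts_def verts_def arcs_def)
  have "\<not> contains_copy (induce ?G C) H" if C: "C \<in> strong_components ?G" and "H \<in> \<H>" for C H
    using contains_Hminus_if_strong_component_contains_copy[OF G C assms(4) P_free[OF C] \<open>H \<in> \<H>\<close>]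
      assms(2,6) \<open>H \<in> \<H>\<close> by (auto simp: wf_digraph_def)
  with X show "scc_deletion_yes \<H> D k"
    unfolding scc_deletion_yes_def by blast
qed

end
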